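(* Let $\epsilon\in\{1,-1\}$ and let $\Phi,\Psi$ be bounded operators on $\ell^2$ satisfying $$\Phi\Phi^\dagger=1+\epsilon\Psi\Psi^\dagger,\quad \Phi^\dagger\Phi=1+\epsilon\Psi^T\bar\Psi,\quad \Phi\Psi^T=\epsilon\Psi\Phi^T,\quad \Phi^\dagger\Psi=\epsilon\Psi^T\bar\Phi,$$ with $\Phi$ having a bounded inverse. Put $X:=\bar\Psi\Phi^{-1}$. Then: (i) if $\epsilon=1$, $\|X\|<1$; (ii) for every orthogonal projector $\tilde P$ on $\ell^2$, the operators $$Y:=1-\epsilon X^\dagger\tilde P^TX\tilde P,\qquad \tilde Y:=1-\epsilon X\tilde PX^\dagger\tilde P^T$$ have bounded inverses, for both $\epsilon=1$ and $\epsilon=-1$.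
   Context: Operators are written as matrices in a fixed orthonormal basis of $\ell^2$; bar denotes entrywise complex conjugation, $T$ the transpose, $\dagger$ the adjoint. $\|\cdot\|$ is the operator norm. *)

theory Defs
  imports Complex_Main
begin

text \<open>Operators on l2 (square-summable complex sequences indexed by nat) are
represented by their matrices in the fixed orthonormal basis.\<close>

type_synonym cmat = "nat \<Rightarrow> nat \<Rightarrow> complex"

definition l2 :: "(nat \<Rightarrow> complex) set" where
  "l2 = {x. summable (\<lambda>n. (cmod (x n))^2)}"

definition l2norm :: "(nat \<Rightarrow> complex) \<Rightarrow> real" where
  "l2norm x = sqrt (\<Sum>n. (cmod (x n))^2)"

definition mat_apply :: "cmat \<Rightarrow> (nat \<Rightarrow> complex) \<Rightarrow> (nat \<Rightarrow> complex)" where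
  "mat_apply A x = (\<lambda>i. \<Sum>j. A i j * x j)"

definition bounded_mat :: "cmat \<Rightarrow> bool" where
  "bounded_mat A \<longleftrightarrow> (\<exists>C. \<forall>x\<in>l2. (\<forall>i. summable (\<lambda>j. A i j * x j))
      \<and> mat_apply A x \<in> l2 \<and> l2norm (mat_apply A x) \<le> C * l2norm x)"

definition op_norm :: "cmat \<Rightarrow> real" where
  "op_norm A = Sup {l2norm (mat_apply A x) | x. x \<in> l2 \<and> l2norm x \<le> 1}"

definition mat_mult :: "cmat \<Rightarrow> cmat \<Rightarrow> cmat" (infixl "**\<^sub>m" 70) where
  "mat_mult A B = (\<lambda>i k. \<Sum>j. A i j * B j k)"

definition mat_id :: cmat where
  "mat_id = (\<lambda>i j. if i = j then 1 else 0)"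

definition mat_add :: "cmat \<Rightarrow> cmat \<Rightarrow> cmat" where
  "mat_add A B = (\<lambda>i j. A i j + B i j)"

definition mat_diff :: "cmat \<Rightarrow> cmat \<Rightarrow> cmat" where
  "mat_diff A B = (\<lambda>i j. A i j - B i j)"

definition mat_scale :: "complex \<Rightarrow> cmat \<Rightarrow> cmat" where
  "mat_scale c A = (\<lambda>i j. c * A i j)"

definition mat_conj :: "cmat \<Rightarrow> cmat" where
  "mat_conj A = (\<lambda>i j. cnj (A i j))"

definition mat_transpose :: "cmat \<Rightarrow> cmat" where
  "mat_transpose A = (\<lambda>i j. A j i)"

definition mat_adj :: "cmat \<Rightarrow> cmat" where
  "mat_adj A = (\<lambda>i j. cnj (A j i))"

definition has_bounded_inverse :: "cmat \<Rightarrow> bool" where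
  "has_bounded_inverse A \<longleftrightarrow>
     (\<exists>B. bounded_mat B \<and> A **\<^sub>m B = mat_id \<and> B **\<^sub>m A = mat_id)"

definition mat_inv :: "cmat \<Rightarrow> cmat" where
  "mat_inv A = (SOME B. bounded_mat B \<and> A **\<^sub>m B = mat_id \<and> B **\<^sub>m A = mat_id)"

definition orth_proj :: "cmat \<Rightarrow> bool" where
  "orth_proj P \<longleftrightarrow> bounded_mat P \<and> P **\<^sub>m P = P \<and> mat_adj P = P"

end

theory Submission
  imports Defs "HOL-Analysis.Infinite_Sum" "HOL-Analysis.L2_Norm" "HOL-Analysis.Elementary_Normed_Spaces"
begin

text \<open>
  For \<open>\<epsilon> = 1\<close> write \<open>A\<close> for the entrywise conjugate of \<open>\<Psi>\<close>, so that \<open>X = A \<Phi>\<^sup>-\<^sup>1\<close> and the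
  second hypothesis reads \<open>\<Phi>\<^sup>\<dagger>\<Phi> = 1 + A\<^sup>\<dagger>A\<close>, i.e. \<open>\<parallel>\<Phi> u\<parallel>\<^sup>2 = \<parallel>u\<parallel>\<^sup>2 + \<parallel>A u\<parallel>\<^sup>2\<close>. With \<open>x = \<Phi> u\<close>
  this gives \<open>\<parallel>X x\<parallel>\<^sup>2 \<le> C\<^sup>2 (\<parallel>x\<parallel>\<^sup>2 - \<parallel>X x\<parallel>\<^sup>2)\<close> for any bound \<open>C\<close> of \<open>A\<close>, hence
  \<open>\<parallel>X\<parallel> \<le> C / \<surd>(1 + C\<^sup>2) < 1\<close>.

  For (ii) put \<open>G = P\<^sup>T X P\<close>. Idempotency of \<open>P\<close> and \<open>P\<^sup>T\<close> lets both operators be written as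
  \<open>1 - \<epsilon> a b\<close> where \<open>1 - \<epsilon> b a\<close> is \<open>1 - \<epsilon> G G\<^sup>\<dagger>\<close> or \<open>1 - \<epsilon> G\<^sup>\<dagger> G\<close>, so by Jacobson's lemma it
  suffices to invert the latter. For \<open>\<epsilon> = 1\<close> this is a Neumann series since \<open>\<parallel>G\<parallel> \<le> \<parallel>X\<parallel> < 1\<close>;
  for \<open>\<epsilon> = -1\<close>, \<open>1 - c (1 + G\<^sup>\<dagger> G)\<close> is a strict contraction when \<open>c = 1 / (1 + \<parallel>G\<parallel>\<^sup>2)\<close>, so
  \<open>c (1 + G\<^sup>\<dagger> G)\<close> is again inverted by a Neumann series.
\<close>

lemma infsum_eq_suminf_nat:
  fixes f :: "nat \<Rightarrow> 'a::banach"
  assumes "summable (\<lambda>n. norm (f n))"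
  shows "infsum f UNIV = suminf f"
  by (rule infsumI[OF norm_summable_imp_has_sum[OF assms summable_sums[OF summable_norm_cancel[OF assms]]]])

lemma abs_summable_on_nat_pairs_iff:
  fixes w :: "nat \<Rightarrow> nat \<Rightarrow> 'a::banach"
  shows "(\<lambda>(n, j). w n j) abs_summable_on UNIV \<times> UNIV \<longleftrightarrow>
    (\<forall>n. summable (\<lambda>j. norm (w n j))) \<and> summable (\<lambda>n. \<Sum>j. norm (w n j))"
proof -
  have rows: "(\<lambda>j. w n j) abs_summable_on UNIV \<longleftrightarrow> summable (\<lambda>j. norm (w n j))" for n
    by (rule summable_on_UNIV_nonneg_real_iff) simp
  have sums: "(\<lambda>n. infsum (\<lambda>j. norm (w n j)) UNIV) abs_summable_on UNIV \<longleftrightarrow> summable (\<lambda>n. \<Sum>j. norm (w n j))"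
    if "\<forall>n. summable (\<lambda>j. norm (w n j))"
  proof -
    have "infsum (\<lambda>j. norm (w n j)) UNIV = (\<Sum>j. norm (w n j))" for n
      using that by (intro infsum_eq_suminf_nat) simp
    then show ?thesis
      using that by (simp add: summable_on_UNIV_nonneg_real_iff suminf_nonneg)
  qed
  show ?thesis
    unfolding abs_summable_on_Sigma_iff[where A = UNIV and B = "\<lambda>_. UNIV"]
    using rows sums by auto
qed

lemma suminf_swap_abs_summable:
  fixes w :: "nat \<Rightarrow> nat \<Rightarrow> 'a::banach"
  assumes rows: "\<And>n. summable (\<lambda>j. norm (w n j))" and total: "summable (\<lambda>n. \<Sum>j. norm (w n j))"
  shows "summable (\<lambda>j. \<Sum>n. w n j)" and "(\<Sum>j. \<Sum>n. w n j) = (\<Sum>n. \<Sum>j. w n j)"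
proof -
  have abs: "(\<lambda>(n, j). w n j) abs_summable_on UNIV \<times> UNIV"
    using rows total abs_summable_on_nat_pairs_iff by blast
  then have "(\<lambda>(j, n). w n j) abs_summable_on UNIV \<times> UNIV"
    by (subst (asm) summable_on_swap) (simp add: case_prod_unfold)
  then have cols: "\<And>j. summable (\<lambda>n. norm (w n j))" and total': "summable (\<lambda>j. \<Sum>n. norm (w n j))"
    using abs_summable_on_nat_pairs_iff[of "\<lambda>j n. w n j"] by auto
  have norm_rows: "summable (\<lambda>n. norm (\<Sum>j. w n j))"
    by (rule summable_comparison_test'[OF total]) (simp add: summable_norm rows)
  have norm_cols: "summable (\<lambda>j. norm (\<Sum>n. w n j))"
    by (rule summable_comparison_test'[OF total']) (simp add: summable_norm cols)
  then show "summable (\<lambda>j. \<Sum>n. w n j)" by (rule summable_norm_cancel)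
  have "infsum (\<lambda>n. infsum (\<lambda>j. w n j) UNIV) UNIV = infsum (\<lambda>j. infsum (\<lambda>n. w n j) UNIV) UNIV"
    using abs_summable_summable[OF abs] by (intro infsum_swap_banach) simp
  then show "(\<Sum>j. \<Sum>n. w n j) = (\<Sum>n. \<Sum>j. w n j)"
    by (simp add: infsum_eq_suminf_nat rows cols norm_rows norm_cols)
qed

lemma summable_cnj_iff: "summable (\<lambda>n. cnj (f n)) \<longleftrightarrow> summable f"
  unfolding summable_def by (metis sums_cnj complex_cnj_cnj)

lemma suminf_cnj: "summable f \<Longrightarrow> (\<Sum>n. cnj (f n)) = cnj (suminf f)"
  by (metis sums_cnj summable_sums sums_unique)

section \<open>The sequence space \<open>\<ell>\<^sup>2\<close>\<close>

definition l2_inner :: "(nat \<Rightarrow> complex) \<Rightarrow> (nat \<Rightarrow> complex) \<Rightarrow> complex" where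
  "l2_inner x y = (\<Sum>n. x n * cnj (y n))"

definition unit_vec :: "nat \<Rightarrow> nat \<Rightarrow> complex" where
  "unit_vec k = (\<lambda>i. if i = k then 1 else 0)"

definition trunc_vec :: "nat \<Rightarrow> (nat \<Rightarrow> complex) \<Rightarrow> nat \<Rightarrow> complex" where
  "trunc_vec N x = (\<lambda>i. if i < N then x i else 0)"

lemma mem_l2_iff: "x \<in> l2 \<longleftrightarrow> summable (\<lambda>n. (cmod (x n))^2)"
  by (simp add: l2_def)

lemma l2norm_nonneg: "x \<in> l2 \<Longrightarrow> l2norm x \<ge> 0"
  unfolding l2norm_def mem_l2_iff by (simp add: suminf_nonneg)

lemma l2norm_power2: "x \<in> l2 \<Longrightarrow> (l2norm x)^2 = (\<Sum>n. (cmod (x n))^2)"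
  unfolding l2norm_def mem_l2_iff by (simp add: suminf_nonneg)

lemma summable_norm_mult_l2:
  assumes "x \<in> l2" "y \<in> l2"
  shows "summable (\<lambda>n. cmod (x n) * cmod (y n))"
proof (rule summable_comparison_test')
  show "summable (\<lambda>n. (cmod (x n))^2 + (cmod (y n))^2)"
    using assms by (intro summable_add) (auto simp: mem_l2_iff)
  fix n
  have "cmod (x n) * cmod (y n) \<le> 2 * (cmod (x n) * cmod (y n))" by simp
  also have "\<dots> \<le> (cmod (x n))^2 + (cmod (y n))^2" by (metis sum_squares_bound mult.assoc)
  finally show "norm (cmod (x n) * cmod (y n)) \<le> (cmod (x n))^2 + (cmod (y n))^2" by simp
qed

lemma summable_mult_l2:
  assumes "x \<in> l2" "y \<in> l2"
  shows "summable (\<lambda>n. cmod (x n * y n))" "summable (\<lambda>n. x n * y n)"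
  using summable_norm_mult_l2[OF assms] by (auto simp: norm_mult intro: summable_norm_cancel)

lemma l2_Cauchy_Schwarz_norm:
  assumes "x \<in> l2" "y \<in> l2"
  shows "(\<Sum>n. cmod (x n) * cmod (y n)) \<le> l2norm x * l2norm y"
proof (rule suminf_le_const[OF summable_norm_mult_l2[OF assms]])
  have partial: "L2_set (\<lambda>n. cmod (z n)) {..<N} \<le> l2norm z" if "z \<in> l2" for z N
    unfolding L2_set_def l2norm_def using that
    by (intro real_sqrt_le_mono sum_le_suminf) (auto simp: mem_l2_iff)
  fix N
  have "(\<Sum>n<N. cmod (x n) * cmod (y n)) = (\<Sum>n<N. \<bar>cmod (x n)\<bar> * \<bar>cmod (y n)\<bar>)" by simp
  also have "\<dots> \<le> L2_set (\<lambda>n. cmod (x n)) {..<N} * L2_set (\<lambda>n. cmod (y n)) {..<N}"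
    by (rule L2_set_mult_ineq)
  also have "\<dots> \<le> l2norm x * l2norm y"
    using assms by (intro mult_mono partial L2_set_nonneg l2norm_nonneg)
  finally show "(\<Sum>n<N. cmod (x n) * cmod (y n)) \<le> l2norm x * l2norm y" .
qed

lemma l2_Cauchy_Schwarz:
  assumes "x \<in> l2" "y \<in> l2"
  shows "cmod (\<Sum>n. x n * y n) \<le> l2norm x * l2norm y"
proof -
  have "cmod (\<Sum>n. x n * y n) \<le> (\<Sum>n. cmod (x n * y n))"
    by (rule summable_norm) (rule summable_mult_l2[OF assms])
  also have "\<dots> \<le> l2norm x * l2norm y"
    using l2_Cauchy_Schwarz_norm[OF assms] by (simp add: norm_mult)
  finally show ?thesis .
qed

lemma l2_cnj: "x \<in> l2 \<Longrightarrow> (\<lambda>n. cnj (x n)) \<in> l2"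
  by (simp add: mem_l2_iff)

lemma l2norm_cnj: "l2norm (\<lambda>n. cnj (x n)) = l2norm x"
  by (simp add: l2norm_def)

lemma l2_zero: "(\<lambda>n. 0) \<in> l2"
  by (simp add: mem_l2_iff)

lemma l2norm_zero: "l2norm (\<lambda>n. 0) = 0"
  by (simp add: l2norm_def)

lemma l2_scale: "x \<in> l2 \<Longrightarrow> (\<lambda>n. c * x n) \<in> l2"
  by (simp add: mem_l2_iff norm_mult power_mult_distrib summable_mult)

lemma l2norm_scale: "x \<in> l2 \<Longrightarrow> l2norm (\<lambda>n. c * x n) = cmod c * l2norm x"
  unfolding l2norm_def using suminf_mult[of "\<lambda>n. (cmod (x n))^2" "(cmod c)^2"]
  by (simp add: mem_l2_iff norm_mult power_mult_distrib real_sqrt_mult)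

lemma l2_add:
  assumes "x \<in> l2" "y \<in> l2"
  shows "(\<lambda>n. x n + y n) \<in> l2"
  unfolding mem_l2_iff
proof (rule summable_comparison_test')
  show "summable (\<lambda>n. 2 * (cmod (x n))^2 + 2 * (cmod (y n))^2)"
    using assms by (intro summable_add summable_mult) (auto simp: mem_l2_iff)
  fix n
  have "(cmod (x n + y n))^2 \<le> (cmod (x n) + cmod (y n))^2"
    by (intro power_mono norm_triangle_ineq) auto
  also have "\<dots> \<le> 2 * (cmod (x n))^2 + 2 * (cmod (y n))^2"
    using sum_squares_bound[of "cmod (x n)" "cmod (y n)"] by (simp add: power2_eq_square algebra_simps)
  finally show "norm ((cmod (x n + y n))^2) \<le> 2 * (cmod (x n))^2 + 2 * (cmod (y n))^2" by simp
qed

lemma l2_diff: "x \<in> l2 \<Longrightarrow> y \<in> l2 \<Longrightarrow> (\<lambda>n. x n - y n) \<in> l2"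
  using l2_add[OF _ l2_scale, of x y "-1"] by simp

lemma l2_unit_vec: "unit_vec k \<in> l2"
  unfolding mem_l2_iff unit_vec_def by (rule summable_finite[of "{k}"]) auto

lemma l2norm_unit_vec: "l2norm (unit_vec k) = 1"
  unfolding l2norm_def unit_vec_def by (subst suminf_finite[of "{k}"]) auto

lemma l2_trunc_vec: "trunc_vec N x \<in> l2"
  unfolding mem_l2_iff trunc_vec_def by (rule summable_finite[of "{..<N}"]) auto

lemma l2norm_trunc_vec: "l2norm (trunc_vec N x) = sqrt (\<Sum>n<N. (cmod (x n))^2)"
  unfolding l2norm_def trunc_vec_def by (subst suminf_finite[of "{..<N}"]) auto

lemma norm_coord_le_l2norm: "x \<in> l2 \<Longrightarrow> cmod (x i) \<le> l2norm x"
  unfolding l2norm_def mem_l2_iff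
  by (rule real_le_rsqrt, rule sum_le_suminf[of _ "{i}", simplified]) auto

lemma l2_inner_self: "x \<in> l2 \<Longrightarrow> l2_inner x x = complex_of_real ((l2norm x)^2)"
  unfolding l2_inner_def l2norm_power2 complex_norm_square[symmetric]
  by (simp add: mem_l2_iff suminf_of_real)

lemma l2norm_power2_eq_Re_inner: "x \<in> l2 \<Longrightarrow> (l2norm x)^2 = Re (l2_inner x x)"
  by (simp add: l2_inner_self)

lemma summable_l2_inner: "x \<in> l2 \<Longrightarrow> y \<in> l2 \<Longrightarrow> summable (\<lambda>n. x n * cnj (y n))"
  using summable_mult_l2(2)[OF _ l2_cnj] by blast

lemma l2_inner_Cauchy_Schwarz: "x \<in> l2 \<Longrightarrow> y \<in> l2 \<Longrightarrow> cmod (l2_inner x y) \<le> l2norm x * l2norm y"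
  unfolding l2_inner_def using l2_Cauchy_Schwarz[OF _ l2_cnj, of x y] by (simp add: l2norm_cnj)

lemma l2_inner_scale:
  assumes "x \<in> l2" "y \<in> l2"
  shows "l2_inner (\<lambda>n. a * x n) (\<lambda>n. b * y n) = a * cnj b * l2_inner x y"
  unfolding l2_inner_def using suminf_mult[OF summable_l2_inner[OF assms], of "a * cnj b"]
  by (simp add: algebra_simps)

lemma l2_inner_add_right:
  assumes "x \<in> l2" "y \<in> l2" "z \<in> l2"
  shows "l2_inner x (\<lambda>n. y n + z n) = l2_inner x y + l2_inner x z"
  unfolding l2_inner_def
  by (simp add: distrib_left suminf_add[OF summable_l2_inner[OF assms(1,2)] summable_l2_inner[OF assms(1,3)]])

lemma l2norm_add_power2:
  assumes x: "x \<in> l2" and y: "y \<in> l2"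
  shows "(l2norm (\<lambda>n. x n + y n))^2 = (l2norm x)^2 + (l2norm y)^2 + 2 * Re (l2_inner x y)"
proof -
  let ?r = "\<lambda>n. 2 * Re (x n * cnj (y n))"
  have pointwise: "(cmod (x n + y n))^2 = (cmod (x n))^2 + (cmod (y n))^2 + ?r n" for n
    unfolding cmod_power2 by (simp add: power2_eq_square algebra_simps)
  have sx: "summable (\<lambda>n. (cmod (x n))^2)" and sy: "summable (\<lambda>n. (cmod (y n))^2)"
    using x y by (auto simp: mem_l2_iff)
  have sr: "summable ?r" by (intro summable_mult summable_Re summable_l2_inner x y)
  have r: "suminf ?r = 2 * Re (l2_inner x y)"
    unfolding l2_inner_def Re_suminf[OF summable_l2_inner[OF x y]]
    by (rule suminf_mult[OF summable_Re[OF summable_l2_inner[OF x y]]])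
  have "(l2norm (\<lambda>n. x n + y n))^2 = (\<Sum>n. (cmod (x n))^2 + (cmod (y n))^2 + ?r n)"
    by (simp only: l2norm_power2[OF l2_add[OF x y]] pointwise)
  also have "\<dots> = (\<Sum>n. (cmod (x n))^2) + (\<Sum>n. (cmod (y n))^2) + suminf ?r"
    by (simp only: suminf_add[OF summable_add[OF sx sy] sr] suminf_add[OF sx sy])
  finally show ?thesis by (simp only: r l2norm_power2[OF x] l2norm_power2[OF y])
qed

lemma l2norm_triangle:
  assumes x: "x \<in> l2" and y: "y \<in> l2"
  shows "l2norm (\<lambda>n. x n + y n) \<le> l2norm x + l2norm y"
proof -
  have "Re (l2_inner x y) \<le> l2norm x * l2norm y"
    using complex_Re_le_cmod l2_inner_Cauchy_Schwarz[OF x y] by (rule order_trans)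
  then have "(l2norm (\<lambda>n. x n + y n))^2 \<le> (l2norm x + l2norm y)^2"
    using l2norm_add_power2[OF x y] by (simp add: power2_eq_square algebra_simps)
  then show ?thesis
    by (rule power2_le_imp_le) (simp add: l2norm_nonneg x y)
qed

lemma l2norm_sum_le:
  assumes "finite A" "\<And>n. n \<in> A \<Longrightarrow> v n \<in> l2"
  shows "(\<lambda>i. \<Sum>n\<in>A. v n i) \<in> l2 \<and> l2norm (\<lambda>i. \<Sum>n\<in>A. v n i) \<le> (\<Sum>n\<in>A. l2norm (v n))"
  using assms
proof (induction A rule: finite_induct)
  case empty
  then show ?case by (simp add: l2_zero l2norm_zero)
next
  case (insert a A)
  then have "l2norm (\<lambda>i. v a i + (\<Sum>n\<in>A. v n i)) \<le> l2norm (v a) + l2norm (\<lambda>i. \<Sum>n\<in>A. v n i)"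
    by (intro l2norm_triangle) auto
  with insert show ?case by (auto intro: l2_add)
qed

lemma l2norm_tail_tendsto_zero:
  assumes x: "x \<in> l2"
  shows "(\<lambda>N. l2norm (\<lambda>n. x n - trunc_vec N x n)) \<longlonglongrightarrow> 0"
proof -
  let ?f = "\<lambda>n. (cmod (x n))^2"
  have f: "summable ?f" using x by (simp add: mem_l2_iff)
  have tail: "l2norm (\<lambda>n. x n - trunc_vec N x n) = sqrt (suminf ?f - (\<Sum>n<N. ?f n))" for N
  proof -
    have "(\<lambda>n. (cmod (x n - trunc_vec N x n))^2) = (\<lambda>n. if n \<in> {..<N} then 0 else ?f n)"
      by (auto simp: trunc_vec_def)
    moreover have "(\<lambda>n. if n \<in> {..<N} then 0 else ?f n) sums (suminf ?f - (\<Sum>n<N. ?f n))"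
      by (rule sums_If_finite_set'[OF summable_sums[OF f]]) (simp_all add: sum_negf)
    ultimately show ?thesis
      unfolding l2norm_def by (simp add: sums_iff)
  qed
  have "(\<lambda>N. suminf ?f - (\<Sum>n<N. ?f n)) \<longlonglongrightarrow> suminf ?f - suminf ?f"
    by (intro tendsto_diff tendsto_const summable_LIMSEQ f)
  then have "(\<lambda>N. sqrt (suminf ?f - (\<Sum>n<N. ?f n))) \<longlonglongrightarrow> sqrt 0"
    by (intro tendsto_real_sqrt) simp
  then show ?thesis by (simp add: tail)
qed

lemma l2_of_bounded_partial_sums:
  assumes K: "K \<ge> 0" and bound: "\<And>N. (\<Sum>n<N. (cmod (v n))^2) \<le> K^2"
  shows "v \<in> l2" "l2norm v \<le> K"
proof -
  show v: "v \<in> l2" unfolding mem_l2_iff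
    by (rule summableI_nonneg_bounded[OF _ bound]) auto
  have "(\<Sum>n. (cmod (v n))^2) \<le> K^2"
    by (rule suminf_le_const) (use v bound in \<open>auto simp: mem_l2_iff\<close>)
  then show "l2norm v \<le> K" unfolding l2norm_def using K
    by (simp add: real_sqrt_le_iff real_le_lsqrt)
qed

lemma l2_pointwise_limit:
  assumes s: "\<And>N. s N \<in> l2" and bound: "\<And>N. l2norm (s N) \<le> K"
    and lim: "\<And>i. (\<lambda>N. s N i) \<longlonglongrightarrow> y i"
  shows "y \<in> l2" "l2norm y \<le> K"
proof -
  have K: "K \<ge> 0" using bound[of 0] l2norm_nonneg[OF s] order_trans by blast
  have "(\<Sum>i<M. (cmod (y i))^2) \<le> K^2" for M
  proof (rule LIMSEQ_le_const2)
    show "(\<lambda>N. \<Sum>i<M. (cmod (s N i))^2) \<longlonglongrightarrow> (\<Sum>i<M. (cmod (y i))^2)"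
      by (intro tendsto_sum tendsto_power tendsto_norm lim)
    have "(\<Sum>i<M. (cmod (s N i))^2) \<le> K^2" for N
    proof -
      have "(\<Sum>i<M. (cmod (s N i))^2) \<le> (l2norm (s N))^2"
        unfolding l2norm_power2[OF s] using s by (intro sum_le_suminf) (auto simp: mem_l2_iff)
      also have "\<dots> \<le> K^2" by (intro power_mono bound l2norm_nonneg s)
      finally show ?thesis .
    qed
    then show "\<exists>N0. \<forall>N\<ge>N0. (\<Sum>i<M. (cmod (s N i))^2) \<le> K^2" by blast
  qed
  then show "y \<in> l2" "l2norm y \<le> K" using l2_of_bounded_partial_sums[OF K] by blast+
qed

lemma suminf_swap_l2_products:
  assumes a: "\<And>n. a n \<in> l2" and b: "\<And>n. b n \<in> l2"
    and majorant: "summable (\<lambda>n. l2norm (a n) * l2norm (b n))"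
  shows "summable (\<lambda>j. \<Sum>n. a n j * b n j)"
    and "(\<Sum>j. \<Sum>n. a n j * b n j) = (\<Sum>n. \<Sum>j. a n j * b n j)"
proof -
  have r: "summable (\<lambda>j. norm (a n j * b n j))" for n
    by (rule summable_mult_l2(1)[OF a b])
  have "summable (\<lambda>n. \<Sum>j. norm (a n j * b n j))"
  proof (rule summable_comparison_test'[OF majorant])
    show "norm (\<Sum>j. norm (a n j * b n j)) \<le> l2norm (a n) * l2norm (b n)" for n
      using l2_Cauchy_Schwarz_norm[OF a[of n] b[of n]] summable_norm_mult_l2[OF a[of n] b[of n]]
      by (simp add: norm_mult suminf_nonneg)
  qed
  from suminf_swap_abs_summable[OF r this]
  show "summable (\<lambda>j. \<Sum>n. a n j * b n j)" "(\<Sum>j. \<Sum>n. a n j * b n j) = (\<Sum>n. \<Sum>j. a n j * b n j)"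
    by blast+
qed

definition mat_bounded_by :: "cmat \<Rightarrow> real \<Rightarrow> bool" where
  "mat_bounded_by A C \<longleftrightarrow> C \<ge> 0 \<and> (\<forall>x\<in>l2. (\<forall>i. summable (\<lambda>j. A i j * x j))
      \<and> mat_apply A x \<in> l2 \<and> l2norm (mat_apply A x) \<le> C * l2norm x)"

definition vec_mat_mult :: "(nat \<Rightarrow> complex) \<Rightarrow> cmat \<Rightarrow> nat \<Rightarrow> complex" where
  "vec_mat_mult a B = (\<lambda>k. \<Sum>j. a j * B j k)"

lemma bounded_mat_iff_bounded_by: "bounded_mat A \<longleftrightarrow> (\<exists>C. mat_bounded_by A C)"
proof
  assume "bounded_mat A"
  then obtain C where C: "\<forall>x\<in>l2. (\<forall>i. summable (\<lambda>j. A i j * x j))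
      \<and> mat_apply A x \<in> l2 \<and> l2norm (mat_apply A x) \<le> C * l2norm x"
    unfolding bounded_mat_def by blast
  have "C * l2norm x \<le> max C 0 * l2norm x" if "x \<in> l2" for x
    by (intro mult_right_mono l2norm_nonneg that) simp
  with C have "mat_bounded_by A (max C 0)"
    unfolding mat_bounded_by_def by (fastforce intro: order_trans)
  then show "\<exists>C. mat_bounded_by A C" ..
qed (auto simp: bounded_mat_def mat_bounded_by_def)

lemma mat_bounded_byD:
  assumes "mat_bounded_by A C" "x \<in> l2"
  shows "summable (\<lambda>j. A i j * x j)" "mat_apply A x \<in> l2"
    "l2norm (mat_apply A x) \<le> C * l2norm x" "C \<ge> 0"
  using assms unfolding mat_bounded_by_def by auto

lemma mat_bounded_by_nonneg: "mat_bounded_by A C \<Longrightarrow> C \<ge> 0"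
  by (simp add: mat_bounded_by_def)

lemma mat_bounded_byI:
  assumes "bounded_mat A" "C \<ge> 0" "\<And>x. x \<in> l2 \<Longrightarrow> l2norm (mat_apply A x) \<le> C * l2norm x"
  shows "mat_bounded_by A C"
  using assms mat_bounded_byD unfolding bounded_mat_iff_bounded_by mat_bounded_by_def by blast

lemma mat_apply_diff_vec:
  assumes A: "mat_bounded_by A C" and x: "x \<in> l2" and y: "y \<in> l2"
  shows "mat_apply A (\<lambda>n. x n - y n) = (\<lambda>i. mat_apply A x i - mat_apply A y i)"
  unfolding mat_apply_def
  by (simp add: right_diff_distrib suminf_diff[OF mat_bounded_byD(1)[OF A x] mat_bounded_byD(1)[OF A y]])

lemma mat_apply_trunc_vec: "mat_apply A (trunc_vec N z) j = (\<Sum>k<N. A j k * z k)"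
  unfolding mat_apply_def trunc_vec_def by (subst suminf_finite[of "{..<N}"]) auto

lemma mat_apply_unit_vec: "mat_apply A (unit_vec k) = (\<lambda>i. A i k)"
  unfolding mat_apply_def unit_vec_def by (rule ext, subst suminf_finite[of "{k}"]) auto

lemma mat_bounded_by_col:
  assumes "mat_bounded_by A C"
  shows "(\<lambda>i. A i k) \<in> l2" "l2norm (\<lambda>i. A i k) \<le> C"
  using mat_bounded_byD(2,3)[OF assms l2_unit_vec, of k]
  by (auto simp: mat_apply_unit_vec l2norm_unit_vec)

lemma le_square_of_le_mult_sqrt:
  fixes S D :: real
  assumes "S \<ge> 0" "D \<ge> 0" "S \<le> D * sqrt S"
  shows "S \<le> D^2"
proof (cases "S = 0")
  case False
  with assms have "sqrt S * sqrt S \<le> D * sqrt S" "sqrt S > 0" by simp_all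
  then have "sqrt S \<le> D" by (rule mult_right_le_imp_le)
  then have "sqrt S ^ 2 \<le> D ^ 2" using assms by (intro power_mono) simp_all
  with assms show ?thesis by simp
qed (use assms in simp)

lemma l2_of_bounded_pairings:
  assumes C: "C \<ge> 0"
    and pairing: "\<And>N. cmod (\<Sum>k<N. v k * cnj (v k)) \<le> C * l2norm (trunc_vec N (\<lambda>k. cnj (v k)))"
  shows "v \<in> l2" "l2norm v \<le> C"
proof -
  have "(\<Sum>k<N. (cmod (v k))^2) \<le> C^2" for N
  proof (rule le_square_of_le_mult_sqrt[OF sum_nonneg C])
    have "(\<Sum>k<N. v k * cnj (v k)) = complex_of_real (\<Sum>k<N. (cmod (v k))^2)"
      by (simp only: complex_norm_square of_real_sum)
    moreover have "0 \<le> (\<Sum>k<N. (cmod (v k))^2)" by (simp add: sum_nonneg)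
    ultimately have "cmod (\<Sum>k<N. v k * cnj (v k)) = (\<Sum>k<N. (cmod (v k))^2)"
      by (simp only: norm_of_real abs_of_nonneg)
    with pairing[of N] show "(\<Sum>k<N. (cmod (v k))^2) \<le> C * sqrt (\<Sum>k<N. (cmod (v k))^2)"
      by (simp only: l2norm_trunc_vec complex_mod_cnj)
  qed simp
  then show "v \<in> l2" "l2norm v \<le> C" using l2_of_bounded_partial_sums[OF C] by blast+
qed

lemma mat_bounded_by_row:
  assumes A: "mat_bounded_by A C"
  shows "(\<lambda>j. A i j) \<in> l2" "l2norm (\<lambda>j. A i j) \<le> C"
proof -
  have "cmod (\<Sum>k<N. A i k * cnj (A i k)) \<le> C * l2norm (trunc_vec N (\<lambda>k. cnj (A i k)))" for N
  proof -
    let ?z = "trunc_vec N (\<lambda>k. cnj (A i k))"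
    have "cmod (\<Sum>k<N. A i k * cnj (A i k)) = cmod (mat_apply A ?z i)"
      by (simp add: mat_apply_trunc_vec)
    also have "\<dots> \<le> C * l2norm ?z"
      using norm_coord_le_l2norm[OF mat_bounded_byD(2)[OF A l2_trunc_vec]]
        mat_bounded_byD(3)[OF A l2_trunc_vec] by (rule order_trans)
    finally show ?thesis .
  qed
  then show "(\<lambda>j. A i j) \<in> l2" "l2norm (\<lambda>j. A i j) \<le> C"
    using l2_of_bounded_pairings[OF mat_bounded_by_nonneg[OF A]] by blast+
qed

lemma vec_mat_mult_trunc_vec:
  assumes B: "mat_bounded_by B C" and a: "a \<in> l2"
  shows "(\<Sum>j. a j * mat_apply B (trunc_vec N w) j) = (\<Sum>k<N. vec_mat_mult a B k * w k)"
proof -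
  have s: "summable (\<lambda>j. a j * B j k)" for k
    by (rule summable_mult_l2(2)[OF a mat_bounded_by_col(1)[OF B]])
  have "(\<Sum>j. a j * mat_apply B (trunc_vec N w) j) = (\<Sum>j. \<Sum>k<N. a j * B j k * w k)"
    by (simp add: mat_apply_trunc_vec sum_distrib_left mult.assoc)
  also have "\<dots> = (\<Sum>k<N. \<Sum>j. a j * B j k * w k)"
    by (rule suminf_sum) (intro summable_mult2 s)
  also have "\<dots> = (\<Sum>k<N. vec_mat_mult a B k * w k)"
    unfolding vec_mat_mult_def by (intro sum.cong refl suminf_mult2[symmetric] s)
  finally show ?thesis .
qed

lemma vec_mat_mult_l2:
  assumes B: "mat_bounded_by B C" and a: "a \<in> l2"
  shows "vec_mat_mult a B \<in> l2" "l2norm (vec_mat_mult a B) \<le> C * l2norm a"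
proof -
  let ?b = "vec_mat_mult a B"
  have "cmod (\<Sum>k<N. ?b k * cnj (?b k)) \<le> C * l2norm a * l2norm (trunc_vec N (\<lambda>k. cnj (?b k)))" for N
  proof -
    let ?z = "trunc_vec N (\<lambda>k. cnj (?b k))"
    have "cmod (\<Sum>k<N. ?b k * cnj (?b k)) = cmod (\<Sum>j. a j * mat_apply B ?z j)"
      unfolding vec_mat_mult_trunc_vec[OF B a] by (simp add: trunc_vec_def)
    also have "\<dots> \<le> l2norm a * l2norm (mat_apply B ?z)"
      by (rule l2_Cauchy_Schwarz[OF a mat_bounded_byD(2)[OF B l2_trunc_vec]])
    also have "\<dots> \<le> l2norm a * (C * l2norm ?z)"
      by (intro mult_left_mono mat_bounded_byD(3)[OF B l2_trunc_vec] l2norm_nonneg a)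
    finally show ?thesis by (simp add: algebra_simps)
  qed
  moreover have "C * l2norm a \<ge> 0"
    using mat_bounded_by_nonneg[OF B] l2norm_nonneg[OF a] by simp
  ultimately show "?b \<in> l2" "l2norm ?b \<le> C * l2norm a"
    using l2_of_bounded_pairings by blast+
qed

text \<open>The pairing identity \<open>a \<cdot> (B x) = (a B) \<cdot> x\<close> holds on finitely supported \<open>x\<close>, and
  passes to the limit because truncations converge in \<open>\<ell>\<^sup>2\<close>.\<close>

lemma vec_mat_mult_pairing:
  assumes B: "mat_bounded_by B C" and a: "a \<in> l2" and x: "x \<in> l2"
  shows "(\<Sum>j. a j * mat_apply B x j) = (\<Sum>k. vec_mat_mult a B k * x k)"
proof -
  let ?L = "\<lambda>y. \<Sum>j. a j * mat_apply B y j"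
  let ?d = "\<lambda>N n. x n - trunc_vec N x n"
  have d: "?d N \<in> l2" for N by (rule l2_diff[OF x l2_trunc_vec])
  have diff: "norm (?L x - ?L (trunc_vec N x)) \<le> l2norm a * (C * l2norm (?d N))" for N
  proof -
    have "?L x - ?L (trunc_vec N x) = (\<Sum>j. a j * mat_apply B x j - a j * mat_apply B (trunc_vec N x) j)"
      by (rule suminf_diff)
        (intro summable_mult_l2(2) a mat_bounded_byD(2)[OF B] x l2_trunc_vec)+
    also have "\<dots> = (\<Sum>j. a j * mat_apply B (?d N) j)"
      by (simp add: mat_apply_diff_vec[OF B x l2_trunc_vec] right_diff_distrib)
    also have "norm \<dots> \<le> l2norm a * l2norm (mat_apply B (?d N))"
      by (rule l2_Cauchy_Schwarz[OF a mat_bounded_byD(2)[OF B d]])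
    also have "\<dots> \<le> l2norm a * (C * l2norm (?d N))"
      by (intro mult_left_mono mat_bounded_byD(3)[OF B d] l2norm_nonneg a)
    finally show ?thesis .
  qed
  have "(\<lambda>N. l2norm a * (C * l2norm (?d N))) \<longlonglongrightarrow> l2norm a * (C * 0)"
    by (intro tendsto_mult tendsto_const l2norm_tail_tendsto_zero[OF x])
  then have "(\<lambda>N. ?L x - ?L (trunc_vec N x)) \<longlonglongrightarrow> 0"
    by (intro Lim_null_comparison[OF always_eventually[OF allI[OF diff]]]) simp
  then have "(\<lambda>N. ?L x - (?L x - ?L (trunc_vec N x))) \<longlonglongrightarrow> ?L x - 0"
    by (intro tendsto_diff tendsto_const)
  then have "(\<lambda>N. ?L (trunc_vec N x)) \<longlonglongrightarrow> ?L x" by simp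
  then have "(\<lambda>N. \<Sum>k<N. vec_mat_mult a B k * x k) \<longlonglongrightarrow> ?L x"
    unfolding vec_mat_mult_trunc_vec[OF B a] by (simp add: trunc_vec_def)
  moreover have "(\<lambda>N. \<Sum>k<N. vec_mat_mult a B k * x k) \<longlonglongrightarrow> (\<Sum>k. vec_mat_mult a B k * x k)"
    by (intro summable_LIMSEQ summable_mult_l2(2) vec_mat_mult_l2(1)[OF B a] x)
  ultimately show ?thesis by (rule LIMSEQ_unique)
qed

lemma mat_mult_eq_vec_mat_mult: "(A **\<^sub>m B) i = vec_mat_mult (\<lambda>j. A i j) B"
  by (simp add: mat_mult_def vec_mat_mult_def)

lemma mat_bounded_by_mult:
  assumes A: "mat_bounded_by A CA" and B: "mat_bounded_by B CB"
  shows "mat_bounded_by (A **\<^sub>m B) (CA * CB)"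
    and "\<And>x. x \<in> l2 \<Longrightarrow> mat_apply (A **\<^sub>m B) x = mat_apply A (mat_apply B x)"
proof -
  note row = mat_bounded_by_row(1)[OF A]
  show apply_mult: "mat_apply (A **\<^sub>m B) x = mat_apply A (mat_apply B x)" if x: "x \<in> l2" for x
    unfolding mat_apply_def[of A] mat_apply_def[of "A **\<^sub>m B"] mat_mult_eq_vec_mat_mult
    by (rule ext, rule vec_mat_mult_pairing[OF B row x, symmetric])
  show "mat_bounded_by (A **\<^sub>m B) (CA * CB)"
    unfolding mat_bounded_by_def
  proof (intro conjI ballI allI)
    fix x i assume x: "x \<in> l2"
    show "summable (\<lambda>j. (A **\<^sub>m B) i j * x j)"
      unfolding mat_mult_eq_vec_mat_mult by (rule summable_mult_l2(2)[OF vec_mat_mult_l2(1)[OF B row] x])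
    have Bx: "mat_apply B x \<in> l2" by (rule mat_bounded_byD(2)[OF B x])
    show "mat_apply (A **\<^sub>m B) x \<in> l2"
      unfolding apply_mult[OF x] by (rule mat_bounded_byD(2)[OF A Bx])
    have "l2norm (mat_apply A (mat_apply B x)) \<le> CA * l2norm (mat_apply B x)"
      by (rule mat_bounded_byD(3)[OF A Bx])
    also have "\<dots> \<le> CA * (CB * l2norm x)"
      by (intro mult_left_mono mat_bounded_byD(3)[OF B x] mat_bounded_by_nonneg[OF A])
    finally show "l2norm (mat_apply (A **\<^sub>m B) x) \<le> CA * CB * l2norm x"
      unfolding apply_mult[OF x] by simp
  qed (use mat_bounded_by_nonneg[OF A] mat_bounded_by_nonneg[OF B] in simp)
qed

lemma mat_eqI:
  assumes "\<And>x. x \<in> l2 \<Longrightarrow> mat_apply A x = mat_apply B x"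
  shows "A = B"
  using assms[OF l2_unit_vec] by (simp add: mat_apply_unit_vec fun_eq_iff)

lemma mat_mult_assoc:
  assumes A: "mat_bounded_by A CA" and B: "mat_bounded_by B CB" and C: "mat_bounded_by C CC"
  shows "(A **\<^sub>m B) **\<^sub>m C = A **\<^sub>m (B **\<^sub>m C)"
  using mat_bounded_by_mult(2)[OF mat_bounded_by_mult(1)[OF A B] C]
    mat_bounded_by_mult(2)[OF A mat_bounded_by_mult(1)[OF B C]]
    mat_bounded_by_mult(2)[OF A B] mat_bounded_by_mult(2)[OF B C] mat_bounded_byD(2)[OF C]
  by (intro mat_eqI) auto

lemma mat_apply_id [simp]: "mat_apply mat_id x = x"
  unfolding mat_apply_def mat_id_def by (rule ext, subst suminf_finite[of "{i}" for i]) auto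

lemma mat_bounded_by_id: "mat_bounded_by mat_id 1"
proof -
  have "summable (\<lambda>j. mat_id i j * x j)" for i x
    unfolding mat_id_def by (rule summable_finite[of "{i}"]) auto
  then show ?thesis unfolding mat_bounded_by_def by simp
qed

lemma mat_bounded_by_adj:
  assumes A: "mat_bounded_by A C"
  shows "mat_bounded_by (mat_adj A) C"
    and "\<And>x y. x \<in> l2 \<Longrightarrow> y \<in> l2 \<Longrightarrow>
      l2_inner (mat_apply A x) y = l2_inner x (mat_apply (mat_adj A) y)"
proof -
  have col: "summable (\<lambda>j. cnj (y j) * A j i)" if "y \<in> l2" for y i
    by (rule summable_mult_l2(2)[OF l2_cnj[OF that] mat_bounded_by_col(1)[OF A]])
  have adj_apply: "mat_apply (mat_adj A) y = (\<lambda>i. cnj (vec_mat_mult (\<lambda>j. cnj (y j)) A i))"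
    if y: "y \<in> l2" for y
    unfolding mat_apply_def mat_adj_def vec_mat_mult_def
    by (rule ext, subst suminf_cnj[OF col[OF y], symmetric]) (simp add: mult.commute)
  show "mat_bounded_by (mat_adj A) C" unfolding mat_bounded_by_def
  proof (intro conjI ballI allI)
    fix y i assume y: "y \<in> l2"
    show "summable (\<lambda>j. mat_adj A i j * y j)"
      using col[OF y, of i] unfolding mat_adj_def
      by (subst summable_cnj_iff[symmetric]) (simp add: mult.commute)
    show "mat_apply (mat_adj A) y \<in> l2" "l2norm (mat_apply (mat_adj A) y) \<le> C * l2norm y"
      unfolding adj_apply[OF y] l2norm_cnj
      using vec_mat_mult_l2[OF A l2_cnj[OF y]] by (auto simp: l2norm_cnj intro: l2_cnj)
  qed (rule mat_bounded_by_nonneg[OF A])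
  fix x y assume x: "x \<in> l2" and y: "y \<in> l2"
  have "l2_inner (mat_apply A x) y = (\<Sum>j. cnj (y j) * mat_apply A x j)"
    unfolding l2_inner_def by (simp add: mult.commute)
  also have "\<dots> = (\<Sum>k. vec_mat_mult (\<lambda>j. cnj (y j)) A k * x k)"
    by (rule vec_mat_mult_pairing[OF A l2_cnj[OF y] x])
  also have "\<dots> = l2_inner x (mat_apply (mat_adj A) y)"
    unfolding l2_inner_def adj_apply[OF y] by (simp add: mult.commute)
  finally show "l2_inner (mat_apply A x) y = l2_inner x (mat_apply (mat_adj A) y)" .
qed

lemma mat_bounded_by_conj:
  assumes A: "mat_bounded_by A C"
  shows "mat_bounded_by (mat_conj A) C"
proof -
  have conj_apply: "mat_apply (mat_conj A) x = (\<lambda>i. cnj (mat_apply A (\<lambda>j. cnj (x j)) i))"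
    if x: "x \<in> l2" for x
    unfolding mat_apply_def mat_conj_def
    by (rule ext, subst suminf_cnj[OF mat_bounded_byD(1)[OF A l2_cnj[OF x]], symmetric]) simp
  show ?thesis unfolding mat_bounded_by_def
  proof (intro conjI ballI allI)
    fix x i assume x: "x \<in> l2"
    show "summable (\<lambda>j. mat_conj A i j * x j)"
      using mat_bounded_byD(1)[OF A l2_cnj[OF x], of i] unfolding mat_conj_def
      by (subst summable_cnj_iff[symmetric]) simp
    show "mat_apply (mat_conj A) x \<in> l2" "l2norm (mat_apply (mat_conj A) x) \<le> C * l2norm x"
      unfolding conj_apply[OF x] l2norm_cnj
      using mat_bounded_byD(2,3)[OF A l2_cnj[OF x]] by (auto simp: l2norm_cnj intro: l2_cnj)
  qed (rule mat_bounded_by_nonneg[OF A])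
qed

lemma mat_transpose_eq_adj_conj: "mat_transpose A = mat_adj (mat_conj A)"
  by (simp add: mat_transpose_def mat_adj_def mat_conj_def)

lemma mat_bounded_by_transpose: "mat_bounded_by A C \<Longrightarrow> mat_bounded_by (mat_transpose A) C"
  unfolding mat_transpose_eq_adj_conj by (intro mat_bounded_by_adj(1) mat_bounded_by_conj)

lemma mat_adj_adj [simp]: "mat_adj (mat_adj A) = A"
  by (simp add: mat_adj_def)

lemma mat_bounded_by_add:
  assumes A: "mat_bounded_by A CA" and B: "mat_bounded_by B CB"
  shows "mat_bounded_by (mat_add A B) (CA + CB)"
    and "\<And>x. x \<in> l2 \<Longrightarrow> mat_apply (mat_add A B) x = (\<lambda>i. mat_apply A x i + mat_apply B x i)"
proof -
  show apply_add: "mat_apply (mat_add A B) x = (\<lambda>i. mat_apply A x i + mat_apply B x i)" if x: "x \<in> l2" for x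
    unfolding mat_apply_def mat_add_def
    by (simp add: distrib_right suminf_add[OF mat_bounded_byD(1)[OF A x] mat_bounded_byD(1)[OF B x]])
  show "mat_bounded_by (mat_add A B) (CA + CB)" unfolding mat_bounded_by_def
  proof (intro conjI ballI allI)
    fix x i assume x: "x \<in> l2"
    note Ax = mat_bounded_byD[OF A x] and Bx = mat_bounded_byD[OF B x]
    show "summable (\<lambda>j. mat_add A B i j * x j)"
      unfolding mat_add_def distrib_right by (intro summable_add Ax(1) Bx(1))
    show "mat_apply (mat_add A B) x \<in> l2" unfolding apply_add[OF x] by (intro l2_add Ax(2) Bx(2))
    have "l2norm (mat_apply (mat_add A B) x) \<le> l2norm (mat_apply A x) + l2norm (mat_apply B x)"
      unfolding apply_add[OF x] by (intro l2norm_triangle Ax(2) Bx(2))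
    also have "\<dots> \<le> (CA + CB) * l2norm x" using Ax(3) Bx(3) by (simp add: algebra_simps)
    finally show "l2norm (mat_apply (mat_add A B) x) \<le> (CA + CB) * l2norm x" .
  qed (use mat_bounded_by_nonneg[OF A] mat_bounded_by_nonneg[OF B] in simp)
qed

lemma mat_bounded_by_scale:
  assumes A: "mat_bounded_by A CA"
  shows "mat_bounded_by (mat_scale c A) (cmod c * CA)"
    and "\<And>x. x \<in> l2 \<Longrightarrow> mat_apply (mat_scale c A) x = (\<lambda>i. c * mat_apply A x i)"
proof -
  show apply_scale: "mat_apply (mat_scale c A) x = (\<lambda>i. c * mat_apply A x i)" if x: "x \<in> l2" for x
    unfolding mat_apply_def mat_scale_def
    by (simp add: mult.assoc suminf_mult[OF mat_bounded_byD(1)[OF A x]])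
  show "mat_bounded_by (mat_scale c A) (cmod c * CA)" unfolding mat_bounded_by_def
  proof (intro conjI ballI allI)
    fix x i assume x: "x \<in> l2"
    note Ax = mat_bounded_byD[OF A x]
    show "summable (\<lambda>j. mat_scale c A i j * x j)"
      unfolding mat_scale_def mult.assoc by (intro summable_mult Ax(1))
    show "mat_apply (mat_scale c A) x \<in> l2" unfolding apply_scale[OF x] by (intro l2_scale Ax(2))
    show "l2norm (mat_apply (mat_scale c A) x) \<le> cmod c * CA * l2norm x"
      unfolding apply_scale[OF x] l2norm_scale[OF Ax(2)] mult.assoc
      by (intro mult_left_mono Ax(3)) simp
  qed (use mat_bounded_by_nonneg[OF A] in simp)
qed

lemma mat_diff_eq_add_scale: "mat_diff A B = mat_add A (mat_scale (-1) B)"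
  by (simp add: mat_diff_def mat_add_def mat_scale_def fun_eq_iff)

lemma mat_bounded_by_diff:
  assumes A: "mat_bounded_by A CA" and B: "mat_bounded_by B CB"
  shows "mat_bounded_by (mat_diff A B) (CA + CB)"
    and "\<And>x. x \<in> l2 \<Longrightarrow> mat_apply (mat_diff A B) x = (\<lambda>i. mat_apply A x i - mat_apply B x i)"
  using mat_bounded_by_add[OF A mat_bounded_by_scale(1)[OF B, of "-1"]]
    mat_bounded_by_scale(2)[OF B, of _ "-1"]
  unfolding mat_diff_eq_add_scale by auto

lemma mat_adj_mult:
  assumes A: "mat_bounded_by A CA" and B: "mat_bounded_by B CB"
  shows "mat_adj (A **\<^sub>m B) = mat_adj B **\<^sub>m mat_adj A"
proof (intro ext)
  fix i k
  have "summable (\<lambda>j. A k j * B j i)"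
    by (rule summable_mult_l2(2)[OF mat_bounded_by_row(1)[OF A] mat_bounded_by_col(1)[OF B]])
  then show "mat_adj (A **\<^sub>m B) i k = (mat_adj B **\<^sub>m mat_adj A) i k"
    unfolding mat_adj_def mat_mult_def by (simp add: suminf_cnj[symmetric] mult.commute)
qed

lemma mat_transpose_mult: "mat_transpose (A **\<^sub>m B) = mat_transpose B **\<^sub>m mat_transpose A"
  by (simp add: mat_transpose_def mat_mult_def mult.commute)

lemma mat_adj_transpose: "mat_adj (mat_transpose A) = mat_transpose (mat_adj A)"
  by (simp add: mat_transpose_def mat_adj_def)

lemma bounded_mat_mult [simp]: "bounded_mat A \<Longrightarrow> bounded_mat B \<Longrightarrow> bounded_mat (A **\<^sub>m B)"
  using mat_bounded_by_mult(1) bounded_mat_iff_bounded_by by blast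

lemma bounded_mat_adj [simp]: "bounded_mat A \<Longrightarrow> bounded_mat (mat_adj A)"
  using mat_bounded_by_adj(1) bounded_mat_iff_bounded_by by blast

lemma bounded_mat_conj [simp]: "bounded_mat A \<Longrightarrow> bounded_mat (mat_conj A)"
  using mat_bounded_by_conj bounded_mat_iff_bounded_by by blast

lemma bounded_mat_transpose [simp]: "bounded_mat A \<Longrightarrow> bounded_mat (mat_transpose A)"
  using mat_bounded_by_transpose bounded_mat_iff_bounded_by by blast

lemma bounded_mat_id [simp]: "bounded_mat mat_id"
  using mat_bounded_by_id bounded_mat_iff_bounded_by by blast

lemma bounded_mat_add [simp]: "bounded_mat A \<Longrightarrow> bounded_mat B \<Longrightarrow> bounded_mat (mat_add A B)"
  using mat_bounded_by_add(1) bounded_mat_iff_bounded_by by blast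

lemma bounded_mat_diff [simp]: "bounded_mat A \<Longrightarrow> bounded_mat B \<Longrightarrow> bounded_mat (mat_diff A B)"
  using mat_bounded_by_diff(1) bounded_mat_iff_bounded_by by blast

lemma bounded_mat_scale [simp]: "bounded_mat A \<Longrightarrow> bounded_mat (mat_scale c A)"
  using mat_bounded_by_scale(1) bounded_mat_iff_bounded_by by blast

lemma mat_apply_l2 [simp]: "bounded_mat A \<Longrightarrow> x \<in> l2 \<Longrightarrow> mat_apply A x \<in> l2"
  using mat_bounded_byD(2) bounded_mat_iff_bounded_by by blast

lemma mat_apply_mult [simp]:
  "bounded_mat A \<Longrightarrow> bounded_mat B \<Longrightarrow> x \<in> l2 \<Longrightarrow> mat_apply (A **\<^sub>m B) x = mat_apply A (mat_apply B x)"
  using mat_bounded_by_mult(2) bounded_mat_iff_bounded_by by blast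

lemma mat_apply_add [simp]:
  "bounded_mat A \<Longrightarrow> bounded_mat B \<Longrightarrow> x \<in> l2 \<Longrightarrow>
    mat_apply (mat_add A B) x = (\<lambda>i. mat_apply A x i + mat_apply B x i)"
  using mat_bounded_by_add(2) bounded_mat_iff_bounded_by by blast

lemma mat_apply_diff [simp]:
  "bounded_mat A \<Longrightarrow> bounded_mat B \<Longrightarrow> x \<in> l2 \<Longrightarrow>
    mat_apply (mat_diff A B) x = (\<lambda>i. mat_apply A x i - mat_apply B x i)"
  using mat_bounded_by_diff(2) bounded_mat_iff_bounded_by by blast

lemma mat_apply_scale [simp]:
  "bounded_mat A \<Longrightarrow> x \<in> l2 \<Longrightarrow> mat_apply (mat_scale c A) x = (\<lambda>i. c * mat_apply A x i)"
  using mat_bounded_by_scale(2) bounded_mat_iff_bounded_by by blast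

lemma l2_inner_adj:
  "bounded_mat A \<Longrightarrow> x \<in> l2 \<Longrightarrow> y \<in> l2 \<Longrightarrow> l2_inner (mat_apply A x) y = l2_inner x (mat_apply (mat_adj A) y)"
  using mat_bounded_by_adj(2) bounded_mat_iff_bounded_by by blast

lemma mat_inv:
  assumes "has_bounded_inverse A"
  shows "bounded_mat (mat_inv A)" "A **\<^sub>m mat_inv A = mat_id"
  using someI_ex[OF assms[unfolded has_bounded_inverse_def]] unfolding mat_inv_def by blast+

section \<open>Neumann series\<close>

primrec mat_pow :: "cmat \<Rightarrow> nat \<Rightarrow> cmat" where
  "mat_pow T 0 = mat_id"
| "mat_pow T (Suc n) = T **\<^sub>m mat_pow T n"

lemma mat_bounded_by_pow:
  assumes T: "mat_bounded_by T q"
  shows "mat_bounded_by (mat_pow T n) (q ^ n)"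
    and mat_apply_pow: "\<And>x. x \<in> l2 \<Longrightarrow> mat_apply (mat_pow T n) x = (mat_apply T ^^ n) x"
proof -
  have "mat_bounded_by (mat_pow T n) (q ^ n) \<and> (\<forall>x\<in>l2. mat_apply (mat_pow T n) x = (mat_apply T ^^ n) x)"
  proof (induction n)
    case 0
    then show ?case by (simp add: mat_bounded_by_id)
  next
    case (Suc n)
    then show ?case using mat_bounded_by_mult[OF T, of "mat_pow T n" "q ^ n"] by simp
  qed
  then show "mat_bounded_by (mat_pow T n) (q ^ n)"
    "\<And>x. x \<in> l2 \<Longrightarrow> mat_apply (mat_pow T n) x = (mat_apply T ^^ n) x" by auto
qed

definition neumann_series :: "cmat \<Rightarrow> cmat" where
  "neumann_series T = (\<lambda>i j. \<Sum>n. mat_pow T n i j)"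

context
  fixes T :: cmat and q :: real
  assumes T: "mat_bounded_by T q" and q: "q < 1"
begin

private lemma q_nonneg: "q \<ge> 0"
  by (rule mat_bounded_by_nonneg[OF T])

private lemma summable_geometric_q: "summable (\<lambda>n. q ^ n)"
  using q_nonneg q by (intro summable_geometric) simp

private lemma iterate_l2:
  assumes "x \<in> l2"
  shows "(mat_apply T ^^ n) x \<in> l2" "l2norm ((mat_apply T ^^ n) x) \<le> q ^ n * l2norm x"
  using mat_bounded_byD(2,3)[OF mat_bounded_by_pow(1)[OF T] assms] mat_apply_pow[OF T assms]
  by auto

private lemma summable_iterate_coord:
  assumes "x \<in> l2"
  shows "summable (\<lambda>n. (mat_apply T ^^ n) x i)"
proof (rule summable_comparison_test'[OF summable_mult2[OF summable_geometric_q]])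
  show "norm ((mat_apply T ^^ n) x i) \<le> q ^ n * l2norm x" for n
    using norm_coord_le_l2norm[OF iterate_l2(1)[OF assms]] iterate_l2(2)[OF assms] by (rule order_trans)
qed

private lemma neumann_series_row:
  assumes x: "x \<in> l2"
  shows "summable (\<lambda>j. neumann_series T i j * x j)"
    and "(\<Sum>j. neumann_series T i j * x j) = (\<Sum>n. (mat_apply T ^^ n) x i)"
proof -
  let ?a = "\<lambda>n j. mat_pow T n i j"
  have a: "?a n \<in> l2" "l2norm (?a n) \<le> q ^ n" for n
    using mat_bounded_by_row[OF mat_bounded_by_pow(1)[OF T]] by auto
  have "summable (\<lambda>n. l2norm (?a n) * l2norm x)"
    by (rule summable_comparison_test'[OF summable_mult2[OF summable_geometric_q, of "l2norm x"]])
      (use a l2norm_nonneg[OF x] l2norm_nonneg[OF a(1)] in \<open>simp add: mult_right_mono\<close>)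
  note swap = suminf_swap_l2_products[of ?a "\<lambda>_. x", OF a(1) x this]
  have entry: "neumann_series T i j * x j = (\<Sum>n. ?a n j * x j)" for j
  proof -
    have "summable (\<lambda>n. ?a n j)"
      using a by (intro summable_comparison_test'[OF summable_geometric_q])
        (meson norm_coord_le_l2norm order_trans)
    then show ?thesis unfolding neumann_series_def by (rule suminf_mult2)
  qed
  show "summable (\<lambda>j. neumann_series T i j * x j)" unfolding entry by (rule swap(1))
  have "(\<Sum>j. ?a n j * x j) = (mat_apply T ^^ n) x i" for n
    using mat_apply_pow[OF T x, of n] by (simp add: mat_apply_def fun_eq_iff)
  then show "(\<Sum>j. neumann_series T i j * x j) = (\<Sum>n. (mat_apply T ^^ n) x i)"
    unfolding entry swap(2) by simp
qed

lemma neumann_series_apply: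
  "x \<in> l2 \<Longrightarrow> mat_apply (neumann_series T) x = (\<lambda>i. \<Sum>n. (mat_apply T ^^ n) x i)"
  by (simp add: mat_apply_def[of "neumann_series T"] neumann_series_row(2))

lemma mat_bounded_by_neumann_series: "mat_bounded_by (neumann_series T) (1 / (1 - q))"
proof -
  have "mat_apply (neumann_series T) x \<in> l2 \<and> l2norm (mat_apply (neumann_series T) x) \<le> 1 / (1 - q) * l2norm x"
    if x: "x \<in> l2" for x
  proof -
    let ?s = "\<lambda>N i. \<Sum>n<N. (mat_apply T ^^ n) x i"
    have "?s N \<in> l2 \<and> l2norm (?s N) \<le> (\<Sum>n<N. l2norm ((mat_apply T ^^ n) x))" for N
      by (rule l2norm_sum_le) (simp_all add: iterate_l2 x)
    moreover have "(\<Sum>n<N. l2norm ((mat_apply T ^^ n) x)) \<le> 1 / (1 - q) * l2norm x" for N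
    proof -
      have "(\<Sum>n<N. l2norm ((mat_apply T ^^ n) x)) \<le> (\<Sum>n<N. q ^ n) * l2norm x"
        unfolding sum_distrib_right by (intro sum_mono iterate_l2(2) x)
      also have "(\<Sum>n<N. q ^ n) \<le> (\<Sum>n. q ^ n)"
        using q_nonneg by (intro sum_le_suminf summable_geometric_q) auto
      then have "(\<Sum>n<N. q ^ n) * l2norm x \<le> 1 / (1 - q) * l2norm x"
        using suminf_geometric[of q] q_nonneg q by (intro mult_right_mono l2norm_nonneg x) simp_all
      finally show ?thesis .
    qed
    moreover have "(\<lambda>N. ?s N i) \<longlonglongrightarrow> mat_apply (neumann_series T) x i" for i
      unfolding neumann_series_apply[OF x] by (intro summable_LIMSEQ summable_iterate_coord x)
    ultimately show ?thesis
      using l2_pointwise_limit[of ?s "1 / (1 - q) * l2norm x"] by (meson order_trans)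
  qed
  moreover have "1 / (1 - q) \<ge> 0" using q by simp
  ultimately show ?thesis
    unfolding mat_bounded_by_def using neumann_series_row(1) by blast
qed

private lemma mat_apply_series_of_iterates:
  assumes x: "x \<in> l2"
  shows "mat_apply T (\<lambda>j. \<Sum>n. (mat_apply T ^^ n) x j) = (\<lambda>i. \<Sum>n. (mat_apply T ^^ Suc n) x i)"
proof
  fix i
  let ?a = "\<lambda>n j. T i j" and ?b = "\<lambda>n. (mat_apply T ^^ n) x"
  have "summable (\<lambda>n. l2norm (?a n) * l2norm (?b n))"
  proof (rule summable_comparison_test'[OF summable_mult[OF summable_mult2[OF summable_geometric_q, of "l2norm x"]]])
    show "norm (l2norm (?a n) * l2norm (?b n)) \<le> l2norm (\<lambda>j. T i j) * (q ^ n * l2norm x)" for n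
      using mat_bounded_by_row[OF T] iterate_l2[OF x]
      by (simp add: l2norm_nonneg mult_left_mono)
  qed
  note swap = suminf_swap_l2_products[of ?a ?b, OF mat_bounded_by_row(1)[OF T] iterate_l2(1)[OF x] this]
  have "(\<Sum>j. T i j * (\<Sum>n. ?b n j)) = (\<Sum>j. \<Sum>n. T i j * ?b n j)"
    by (simp add: suminf_mult summable_iterate_coord x)
  also have "\<dots> = (\<Sum>n. \<Sum>j. T i j * ?b n j)" by (rule swap(2))
  finally show "mat_apply T (\<lambda>j. \<Sum>n. ?b n j) i = (\<Sum>n. (mat_apply T ^^ Suc n) x i)"
    by (simp add: mat_apply_def[of T])
qed

private lemma iterate_coord_tendsto_zero:
  assumes x: "x \<in> l2"
  shows "(\<lambda>n. (mat_apply T ^^ n) x i) \<longlonglongrightarrow> 0"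
proof (rule Lim_null_comparison)
  show "\<forall>\<^sub>F n in sequentially. norm ((mat_apply T ^^ n) x i) \<le> q ^ n * l2norm x"
    using norm_coord_le_l2norm[OF iterate_l2(1)[OF x]] iterate_l2(2)[OF x]
    by (intro always_eventually allI) (meson order_trans)
  show "(\<lambda>n. q ^ n * l2norm x) \<longlonglongrightarrow> 0"
    using q_nonneg q by (intro tendsto_mult_left_zero LIMSEQ_power_zero) simp
qed

lemma one_minus_mult_neumann_series: "mat_diff mat_id T **\<^sub>m neumann_series T = mat_id"
proof (rule mat_eqI)
  note R = mat_bounded_by_neumann_series and D = mat_bounded_by_diff[OF mat_bounded_by_id T]
  fix x assume x: "x \<in> l2"
  have split: "(\<Sum>n. (mat_apply T ^^ n) x i) = (\<Sum>n. (mat_apply T ^^ Suc n) x i) + x i" for i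
    using suminf_split_head[OF summable_iterate_coord[OF x, of i]] by simp
  have "mat_apply (mat_diff mat_id T **\<^sub>m neumann_series T) x
      = (\<lambda>i. mat_apply (neumann_series T) x i - mat_apply T (mat_apply (neumann_series T) x) i)"
    by (simp add: mat_bounded_by_mult(2)[OF D(1) R x] D(2) mat_bounded_byD(2)[OF R x])
  also have "\<dots> = (\<lambda>i. (\<Sum>n. (mat_apply T ^^ n) x i) - (\<Sum>n. (mat_apply T ^^ Suc n) x i))"
    by (simp only: neumann_series_apply[OF x] mat_apply_series_of_iterates[OF x])
  also have "\<dots> = mat_apply mat_id x"
    by (simp only: split mat_apply_id) simp
  finally show "mat_apply (mat_diff mat_id T **\<^sub>m neumann_series T) x = mat_apply mat_id x" .
qed

lemma neumann_series_mult_one_minus: "neumann_series T **\<^sub>m mat_diff mat_id T = mat_id"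
proof (rule mat_eqI)
  note R = mat_bounded_by_neumann_series and D = mat_bounded_by_diff[OF mat_bounded_by_id T]
  fix x assume x: "x \<in> l2"
  have Tx: "mat_apply T x \<in> l2" by (rule mat_bounded_byD(2)[OF T x])
  have "(mat_apply T ^^ n) (\<lambda>i. x i - mat_apply T x i)
      = (\<lambda>i. (mat_apply T ^^ n) x i - (mat_apply T ^^ Suc n) x i)" for n
    using mat_apply_diff_vec[OF mat_bounded_by_pow(1)[OF T] x Tx, of n]
    by (simp add: mat_apply_pow[OF T] x Tx l2_diff funpow_Suc_right del: funpow.simps)
  moreover have "(\<Sum>n. (mat_apply T ^^ n) x i - (mat_apply T ^^ Suc n) x i) = x i" for i
    using telescope_sums'[OF iterate_coord_tendsto_zero[OF x]] by (simp add: sums_iff)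
  ultimately show "mat_apply (neumann_series T **\<^sub>m mat_diff mat_id T) x = mat_apply mat_id x"
    by (simp add: mat_bounded_by_mult(2)[OF R D(1) x] D(2) x neumann_series_apply l2_diff Tx)
qed

end

lemma has_bounded_inverse_one_minus:
  assumes "mat_bounded_by T q" "q < 1"
  shows "has_bounded_inverse (mat_diff mat_id T)"
  unfolding has_bounded_inverse_def bounded_mat_iff_bounded_by
  using one_minus_mult_neumann_series[OF assms] neumann_series_mult_one_minus[OF assms]
    mat_bounded_by_neumann_series[OF assms] by blast

definition invertible_elem :: "'a::ring_1 \<Rightarrow> bool" where
  "invertible_elem a \<longleftrightarrow> (\<exists>b. a * b = 1 \<and> b * a = 1)"

text \<open>Jacobson's lemma: if \<open>1 - a b\<close> is invertible with inverse \<open>k\<close>, then \<open>1 + b k a\<close> inverts \<open>1 - b a\<close>.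
  The central factor \<open>c\<close> lets the lemma absorb a scalar such as the sign \<open>\<epsilon>\<close>.\<close>

lemma invertible_elem_one_minus_swap:
  fixes a b c :: "'a::ring_1"
  assumes central: "c * b = b * c" and inv: "invertible_elem (1 - c * (a * b))"
  shows "invertible_elem (1 - c * (b * a))"
proof -
  obtain k where k: "(1 - c * a * b) * k = 1" "k * (1 - c * a * b) = 1"
    using inv unfolding invertible_elem_def by (auto simp: mult.assoc)
  have ba: "c * (b * a) = b * (c * a)" by (metis central mult.assoc)
  have "(1 - b * (c * a)) * (1 + b * k * (c * a)) = 1 - b * (c * a) + b * ((1 - c * a * b) * k) * (c * a)"
    by (simp add: algebra_simps)
  moreover have "(1 + b * k * (c * a)) * (1 - b * (c * a)) = 1 - b * (c * a) + b * (k * (1 - c * a * b)) * (c * a)"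
    by (simp add: algebra_simps)
  ultimately show ?thesis
    unfolding invertible_elem_def ba k by (auto simp: mult.assoc)
qed

lemma invertible_elem_cancel_left:
  fixes u a :: "'a::ring_1"
  assumes u: "invertible_elem u" and ua: "invertible_elem (u * a)"
  shows "invertible_elem a"
proof -
  obtain v where v: "v * u = 1" using u unfolding invertible_elem_def by blast
  obtain w where w: "u * a * w = 1" "w * (u * a) = 1" using ua unfolding invertible_elem_def by blast
  have "a * (w * u) = v * (u * a * w) * u" by (metis v mult.assoc mult_1_left)
  with v w show ?thesis unfolding invertible_elem_def by (metis mult.assoc mult_1_right)
qed

lemma summable_mat_mult_entry:
  "bounded_mat A \<Longrightarrow> bounded_mat B \<Longrightarrow> summable (\<lambda>j. A i j * B j k)"
  unfolding bounded_mat_iff_bounded_by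
  using summable_mult_l2(2)[OF mat_bounded_by_row(1) mat_bounded_by_col(1)] by blast

lemma mat_mult_add_left:
  "bounded_mat A \<Longrightarrow> bounded_mat B \<Longrightarrow> bounded_mat C \<Longrightarrow>
    mat_add A B **\<^sub>m C = mat_add (A **\<^sub>m C) (B **\<^sub>m C)"
  unfolding mat_mult_def mat_add_def
  by (simp add: distrib_right suminf_add summable_mat_mult_entry)

lemma mat_mult_add_right:
  "bounded_mat A \<Longrightarrow> bounded_mat B \<Longrightarrow> bounded_mat C \<Longrightarrow>
    A **\<^sub>m mat_add B C = mat_add (A **\<^sub>m B) (A **\<^sub>m C)"
  unfolding mat_mult_def mat_add_def
  by (simp add: distrib_left suminf_add summable_mat_mult_entry)

lemma mat_mult_id_left [simp]: "mat_id **\<^sub>m A = A"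
  unfolding mat_mult_def mat_id_def by (intro ext, subst suminf_finite[of "{i}" for i]) auto

lemma mat_mult_id_right [simp]: "A **\<^sub>m mat_id = A"
  unfolding mat_mult_def mat_id_def by (intro ext, subst suminf_finite[of "{k}" for k]) auto

lemma mat_scale_eq_mult: "mat_scale c A = mat_scale c mat_id **\<^sub>m A"
  unfolding mat_mult_def mat_scale_def mat_id_def
  by (intro ext, subst suminf_finite[of "{i}" for i]) auto

typedef bmat = "{A. bounded_mat A}" morphisms mat_of_bmat Bmat
  using bounded_mat_id by blast

setup_lifting type_definition_bmat

instantiation bmat :: ring_1
begin

lift_definition zero_bmat :: bmat is "\<lambda>i j. 0"
  using bounded_mat_scale[OF bounded_mat_id, of 0] by (simp add: mat_scale_def)
lift_definition one_bmat :: bmat is mat_id by simp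
lift_definition plus_bmat :: "bmat \<Rightarrow> bmat \<Rightarrow> bmat" is mat_add by simp
lift_definition minus_bmat :: "bmat \<Rightarrow> bmat \<Rightarrow> bmat" is mat_diff by simp
lift_definition uminus_bmat :: "bmat \<Rightarrow> bmat" is "mat_scale (-1)" by simp
lift_definition times_bmat :: "bmat \<Rightarrow> bmat \<Rightarrow> bmat" is mat_mult by simp

instance
proof
  fix a b c :: bmat
  show "a * b * c = a * (b * c)"
    by transfer (auto simp: bounded_mat_iff_bounded_by intro: mat_mult_assoc)
  show "(a + b) * c = a * c + b * c" by transfer (rule mat_mult_add_left)
  show "a * (b + c) = a * b + a * c" by transfer (rule mat_mult_add_right)
  show "1 * a = a" "a * 1 = a" by (transfer, simp)+
  show "a + b + c = a + (b + c)" "a + b = b + a" "0 + a = a" "- a + a = 0" "a - b = a + - b"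
    by (transfer, simp add: mat_add_def mat_diff_def mat_scale_def mat_id_def fun_eq_iff)+
  show "(0::bmat) \<noteq> 1"
    by transfer (simp add: mat_scale_def mat_id_def fun_eq_iff)
qed

end

lemma Bmat_mult: "bounded_mat A \<Longrightarrow> bounded_mat B \<Longrightarrow> Bmat (A **\<^sub>m B) = Bmat A * Bmat B"
  by (simp add: times_bmat_def Bmat_inverse)

lemma Bmat_diff: "bounded_mat A \<Longrightarrow> bounded_mat B \<Longrightarrow> Bmat (mat_diff A B) = Bmat A - Bmat B"
  by (simp add: minus_bmat_def Bmat_inverse)

lemma Bmat_id: "Bmat mat_id = 1"
  by (simp add: one_bmat_def)

lemma mat_scale_id_mult_commute: "mat_scale c mat_id **\<^sub>m A = A **\<^sub>m mat_scale c mat_id"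
  unfolding mat_mult_def mat_scale_def mat_id_def
  by (intro ext, subst (1 2) suminf_finite[of "{_}"]) (auto simp: mult.commute)

lift_definition scalar_bmat :: "complex \<Rightarrow> bmat" is "\<lambda>c. mat_scale c mat_id" by simp

lemma scalar_bmat_commute: "scalar_bmat c * a = a * scalar_bmat c"
  by transfer (rule mat_scale_id_mult_commute)

lemma scalar_bmat_mult: "scalar_bmat c * scalar_bmat d = scalar_bmat (c * d)"
  by transfer (simp only: mat_scale_eq_mult[symmetric], simp add: mat_scale_def mult.assoc)

lemma scalar_bmat_one: "scalar_bmat 1 = 1"
  by transfer (simp add: mat_scale_def)

lemma Bmat_scale: "bounded_mat M \<Longrightarrow> Bmat (mat_scale c M) = scalar_bmat c * Bmat M"
  by (simp add: scalar_bmat_def Bmat_mult mat_scale_eq_mult[of c M])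

lemma Bmat_one_minus_scale:
  "bounded_mat M \<Longrightarrow> Bmat (mat_diff mat_id (mat_scale c M)) = 1 - scalar_bmat c * Bmat M"
  by (simp add: Bmat_diff Bmat_id Bmat_scale)

lemma has_bounded_inverse_iff_invertible_elem:
  assumes "bounded_mat A"
  shows "has_bounded_inverse A \<longleftrightarrow> invertible_elem (Bmat A)"
proof
  assume "has_bounded_inverse A"
  then obtain B where "bounded_mat B" "A **\<^sub>m B = mat_id" "B **\<^sub>m A = mat_id"
    unfolding has_bounded_inverse_def by blast
  with assms show "invertible_elem (Bmat A)"
    unfolding invertible_elem_def by (metis Bmat_mult Bmat_id)
next
  assume "invertible_elem (Bmat A)"
  then obtain b where "Bmat A * b = 1" "b * Bmat A = 1"
    unfolding invertible_elem_def by blast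
  then have "A **\<^sub>m mat_of_bmat b = mat_id" "mat_of_bmat b **\<^sub>m A = mat_id"
    using assms by (metis Bmat_inverse mem_Collect_eq one_bmat.rep_eq times_bmat.rep_eq)+
  then show "has_bounded_inverse A"
    unfolding has_bounded_inverse_def using mat_of_bmat by blast
qed

lemma has_bounded_inverse_of_scale:
  assumes M: "bounded_mat M" and c: "c \<noteq> 0" and inv: "has_bounded_inverse (mat_scale c M)"
  shows "has_bounded_inverse M"
proof -
  have "invertible_elem (scalar_bmat c)"
    unfolding invertible_elem_def using c
    by (metis scalar_bmat_mult scalar_bmat_one mult.commute divide_self_if times_divide_eq_right mult_1_right)
  moreover have "invertible_elem (scalar_bmat c * Bmat M)"
    using inv M by (simp add: has_bounded_inverse_iff_invertible_elem Bmat_scale)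
  ultimately show ?thesis
    using M has_bounded_inverse_iff_invertible_elem invertible_elem_cancel_left by blast
qed

section \<open>Invertibility of \<open>1 - \<epsilon> G\<^sup>\<dagger> G\<close>\<close>

lemma mat_bounded_by_orth_proj:
  assumes "orth_proj P"
  shows "mat_bounded_by P 1"
proof -
  obtain C where P: "mat_bounded_by P C" "P **\<^sub>m P = P" "mat_adj P = P"
    using assms unfolding orth_proj_def bounded_mat_iff_bounded_by by blast
  show ?thesis
  proof (rule mat_bounded_byI)
    fix y assume y: "y \<in> l2"
    let ?Py = "mat_apply P y"
    have Py: "?Py \<in> l2" by (rule mat_bounded_byD(2)[OF P(1) y])
    have "(l2norm ?Py)^2 = Re (l2_inner y (mat_apply P ?Py))"
      using mat_bounded_by_adj(2)[OF P(1) y Py] P(3) by (simp add: l2norm_power2_eq_Re_inner[OF Py])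
    also have "mat_apply P ?Py = ?Py"
      using mat_bounded_by_mult(2)[OF P(1) P(1) y] P(2) by simp
    also have "Re (l2_inner y ?Py) \<le> l2norm y * l2norm ?Py"
      using complex_Re_le_cmod l2_inner_Cauchy_Schwarz[OF y Py] by (rule order_trans)
    finally have "l2norm ?Py * l2norm ?Py \<le> l2norm y * l2norm ?Py"
      by (simp add: power2_eq_square)
    then show "l2norm ?Py \<le> 1 * l2norm y"
      using l2norm_nonneg[OF y] l2norm_nonneg[OF Py]
      by (cases "l2norm ?Py = 0") (simp_all add: mult_le_cancel_right)
  qed (use assms in \<open>simp_all add: orth_proj_def\<close>)
qed

lemma orth_proj_transpose: "orth_proj P \<Longrightarrow> orth_proj (mat_transpose P)"
  unfolding orth_proj_def by (simp add: mat_transpose_mult[symmetric] mat_adj_transpose)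

lemma has_bounded_inverse_one_minus_gram:
  assumes G: "mat_bounded_by G k" and k: "k < 1"
  shows "has_bounded_inverse (mat_diff mat_id (mat_adj G **\<^sub>m G))"
proof (rule has_bounded_inverse_one_minus)
  show "mat_bounded_by (mat_adj G **\<^sub>m G) (k * k)"
    by (rule mat_bounded_by_mult(1)[OF mat_bounded_by_adj(1)[OF G] G])
  show "k * k < 1"
    using k mat_bounded_by_nonneg[OF G] by (metis mult_left_le_one_le less_le_not_le order.strict_trans1 le_less)
qed

text \<open>Since \<open>s = G\<^sup>\<dagger> G x\<close> satisfies \<open>Re \<langle>x, s\<rangle> = \<parallel>G x\<parallel>\<^sup>2\<close> and \<open>\<parallel>s\<parallel> \<le> k \<parallel>G x\<parallel>\<close>, the choice
  \<open>c = 1 / (1 + k\<^sup>2)\<close> makes the cross term absorb \<open>c\<^sup>2 \<parallel>s\<parallel>\<^sup>2\<close>, so \<open>1 - c (1 + G\<^sup>\<dagger> G)\<close> is a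
  contraction.\<close>

lemma l2norm_affine_combination_le:
  assumes x: "x \<in> l2" and s: "s \<in> l2"
    and inner: "Re (l2_inner x s) = g^2" and norm_s: "l2norm s \<le> k * g"
    and c: "0 \<le> c" "c * k^2 = 1 - c"
  shows "l2norm (\<lambda>i. of_real (1 - c) * x i + of_real (- c) * s i) \<le> (1 - c) * l2norm x"
proof -
  have c1: "c \<le> 1" using c by (metis diff_ge_0_iff_ge mult_nonneg_nonneg zero_le_power2)
  have "c^2 * (l2norm s)^2 \<le> c^2 * (k * g)^2"
    using norm_s l2norm_nonneg[OF s] by (intro mult_left_mono power_mono) simp_all
  also have "\<dots> = c * (c * k^2) * g^2" by (simp add: power2_eq_square)
  also have "\<dots> = c * (1 - c) * g^2" by (simp only: c(2))
  finally have absorb: "c^2 * (l2norm s)^2 \<le> c * (1 - c) * g^2" .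
  have "(l2norm (\<lambda>i. of_real (1 - c) * x i + of_real (- c) * s i))^2
      = (l2norm (\<lambda>i. of_real (1 - c) * x i))^2 + (l2norm (\<lambda>i. of_real (- c) * s i))^2
        + 2 * Re (l2_inner (\<lambda>i. of_real (1 - c) * x i) (\<lambda>i. of_real (- c) * s i))"
    by (rule l2norm_add_power2[OF l2_scale[OF x] l2_scale[OF s]])
  also have "\<dots> = (1 - c)^2 * (l2norm x)^2 + c^2 * (l2norm s)^2 - 2 * (1 - c) * c * g^2"
    unfolding l2norm_scale[OF x] l2norm_scale[OF s] l2_inner_scale[OF x s] norm_of_real
    using c c1 inner by (simp add: power2_eq_square algebra_simps)
  also have "\<dots> \<le> (1 - c)^2 * (l2norm x)^2 - c * (1 - c) * g^2"
    using absorb by (simp add: algebra_simps)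
  also have "\<dots> \<le> ((1 - c) * l2norm x)^2"
  proof -
    have "0 \<le> c * (1 - c) * g^2" using c(1) c1 by simp
    then show ?thesis unfolding power_mult_distrib by linarith
  qed
  finally show ?thesis
    by (rule power2_le_imp_le) (use c1 l2norm_nonneg[OF x] in simp)
qed

lemma has_bounded_inverse_one_plus_gram:
  assumes G: "mat_bounded_by G k"
  shows "has_bounded_inverse (mat_add mat_id (mat_adj G **\<^sub>m G))"
proof -
  let ?S = "mat_adj G **\<^sub>m G"
  let ?M = "mat_add mat_id ?S"
  define c where "c = 1 / (1 + k^2)"
  have "1 + k^2 > 0" by (simp add: add_pos_nonneg)
  then have c: "0 < c" "c * k^2 = 1 - c" "c \<le> 1"
    unfolding c_def by (simp_all add: field_simps)
  have bG: "bounded_mat G" using G bounded_mat_iff_bounded_by by blast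
  let ?T = "mat_diff mat_id (mat_scale (of_real c) ?M)"
  have "mat_bounded_by ?T (1 - c)"
  proof (rule mat_bounded_byI)
    show "bounded_mat ?T" "0 \<le> 1 - c" using bG c by simp_all
    fix x assume x: "x \<in> l2"
    let ?u = "mat_apply G x"
    have "mat_apply ?T x = (\<lambda>i. of_real (1 - c) * x i + of_real (- c) * mat_apply ?S x i)"
      using bG x by (simp add: algebra_simps)
    moreover have "Re (l2_inner x (mat_apply ?S x)) = (l2norm ?u)^2"
      using bG x l2_inner_adj[OF bG x, of ?u] by (simp add: l2norm_power2_eq_Re_inner)
    moreover have "l2norm (mat_apply ?S x) \<le> k * l2norm ?u"
      using mat_bounded_byD(3)[OF mat_bounded_by_adj(1)[OF G], of ?u] bG x by simp
    ultimately show "l2norm (mat_apply ?T x) \<le> (1 - c) * l2norm x"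
      using l2norm_affine_combination_le[of x "mat_apply ?S x"] bG x c by simp
  qed
  then have "has_bounded_inverse (mat_diff mat_id ?T)"
    using c by (intro has_bounded_inverse_one_minus[of _ "1 - c"]) simp_all
  moreover have "mat_diff mat_id ?T = mat_scale (of_real c) ?M"
    by (simp add: mat_diff_def fun_eq_iff)
  ultimately show ?thesis
    using has_bounded_inverse_of_scale[of ?M "of_real c"] bG c by simp
qed

lemma has_bounded_inverse_one_minus_scaled_gram:
  assumes G: "mat_bounded_by G k" and \<epsilon>: "\<epsilon> = -1 \<or> (\<epsilon> = 1 \<and> k < 1)"
  shows "has_bounded_inverse (mat_diff mat_id (mat_scale \<epsilon> (mat_adj G **\<^sub>m G)))"
    and "has_bounded_inverse (mat_diff mat_id (mat_scale \<epsilon> (G **\<^sub>m mat_adj G)))"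
proof -
  have "mat_diff A (mat_scale 1 B) = mat_diff A B" "mat_diff A (mat_scale (-1) B) = mat_add A B" for A B
    by (simp_all add: mat_diff_def mat_add_def mat_scale_def fun_eq_iff)
  then have gram: "has_bounded_inverse (mat_diff mat_id (mat_scale \<epsilon> (mat_adj H **\<^sub>m H)))"
    if "mat_bounded_by H k" for H
    using \<epsilon> has_bounded_inverse_one_minus_gram[OF that] has_bounded_inverse_one_plus_gram[OF that] by auto
  show "has_bounded_inverse (mat_diff mat_id (mat_scale \<epsilon> (mat_adj G **\<^sub>m G)))"
    by (rule gram[OF G])
  show "has_bounded_inverse (mat_diff mat_id (mat_scale \<epsilon> (G **\<^sub>m mat_adj G)))"
    using gram[OF mat_bounded_by_adj(1)[OF G]] by simp
qed

lemma mat_adj_compression: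
  assumes P: "orth_proj P" and X: "mat_bounded_by X k"
  shows "mat_adj (mat_transpose P **\<^sub>m X **\<^sub>m P) = P **\<^sub>m mat_adj X **\<^sub>m mat_transpose P"
proof -
  have Q: "orth_proj (mat_transpose P)" by (rule orth_proj_transpose[OF P])
  note bP = mat_bounded_by_orth_proj[OF P] and bQ = mat_bounded_by_orth_proj[OF Q]
  show ?thesis
    using P Q unfolding orth_proj_def
    by (simp add: mat_adj_mult[OF mat_bounded_by_mult(1)[OF bQ X] bP] mat_adj_mult[OF bQ X]
        mat_mult_assoc[OF bP mat_bounded_by_adj(1)[OF X] bQ])
qed

lemma has_bounded_inverse_one_minus_compressions:
  assumes X: "mat_bounded_by X k" and \<epsilon>: "\<epsilon> = -1 \<or> (\<epsilon> = 1 \<and> k < 1)" and P: "orth_proj P"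
  shows "has_bounded_inverse
      (mat_diff mat_id (mat_scale \<epsilon> (mat_adj X **\<^sub>m mat_transpose P **\<^sub>m X **\<^sub>m P)))"
    and "has_bounded_inverse
      (mat_diff mat_id (mat_scale \<epsilon> (X **\<^sub>m P **\<^sub>m mat_adj X **\<^sub>m mat_transpose P)))"
proof -
  let ?Q = "mat_transpose P"
  have Q: "orth_proj ?Q" by (rule orth_proj_transpose[OF P])
  have G: "mat_bounded_by (?Q **\<^sub>m X **\<^sub>m P) k"
    using mat_bounded_by_mult(1)[OF mat_bounded_by_mult(1)[OF mat_bounded_by_orth_proj[OF Q] X]
        mat_bounded_by_orth_proj[OF P]] by simp
  have bounded: "bounded_mat X" "bounded_mat (mat_adj X)" "bounded_mat P" "bounded_mat ?Q"
    using X P Q bounded_mat_iff_bounded_by bounded_mat_adj unfolding orth_proj_def by blast+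
  let ?p = "Bmat P" and ?q = "Bmat ?Q" and ?x = "Bmat X" and ?x' = "Bmat (mat_adj X)"
    and ?s = "scalar_bmat \<epsilon>"
  have pp: "?p * (?p * y) = ?p * y" and qq: "?q * (?q * y) = ?q * y" for y
    using P Q bounded unfolding orth_proj_def by (metis Bmat_mult mult.assoc)+
  note gram = has_bounded_inverse_one_minus_scaled_gram[OF G \<epsilon>, unfolded mat_adj_compression[OF P X]]
  have inv1: "invertible_elem (1 - ?s * ((?p * ?x' * ?q) * (?x * ?p)))"
    using gram(1) bounded
    by (simp add: has_bounded_inverse_iff_invertible_elem Bmat_one_minus_scale Bmat_mult mult.assoc qq)
  have inv2: "invertible_elem (1 - ?s * ((?q * ?x * ?p) * (?x' * ?q)))"
    using gram(2) bounded
    by (simp add: has_bounded_inverse_iff_invertible_elem Bmat_one_minus_scale Bmat_mult mult.assoc pp)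
  show "has_bounded_inverse (mat_diff mat_id (mat_scale \<epsilon> (mat_adj X **\<^sub>m ?Q **\<^sub>m X **\<^sub>m P)))"
    using invertible_elem_one_minus_swap[OF scalar_bmat_commute inv2] bounded
    by (simp add: has_bounded_inverse_iff_invertible_elem Bmat_one_minus_scale Bmat_mult mult.assoc qq)
  show "has_bounded_inverse (mat_diff mat_id (mat_scale \<epsilon> (X **\<^sub>m P **\<^sub>m mat_adj X **\<^sub>m ?Q)))"
    using invertible_elem_one_minus_swap[OF scalar_bmat_commute inv1] bounded
    by (simp add: has_bounded_inverse_iff_invertible_elem Bmat_one_minus_scale Bmat_mult mult.assoc pp)
qed

section \<open>The contraction estimate for \<open>\<epsilon> = 1\<close>\<close>

lemma l2norm_power2_gram:
  assumes \<Phi>: "bounded_mat \<Phi>" and A: "bounded_mat A"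
    and gram: "mat_adj \<Phi> **\<^sub>m \<Phi> = mat_add mat_id (mat_adj A **\<^sub>m A)" and u: "u \<in> l2"
  shows "(l2norm (mat_apply \<Phi> u))^2 = (l2norm u)^2 + (l2norm (mat_apply A u))^2"
proof -
  have "(l2norm (mat_apply \<Phi> u))^2 = Re (l2_inner u (mat_apply (mat_adj \<Phi> **\<^sub>m \<Phi>) u))"
    using \<Phi> u by (simp add: l2norm_power2_eq_Re_inner l2_inner_adj)
  also have "\<dots> = Re (l2_inner u u) + Re (l2_inner u (mat_apply (mat_adj A) (mat_apply A u)))"
    using A u by (simp add: gram l2_inner_add_right)
  also have "\<dots> = (l2norm u)^2 + (l2norm (mat_apply A u))^2"
    using A u by (simp add: l2norm_power2_eq_Re_inner l2_inner_adj)
  finally show ?thesis .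
qed

lemma mat_bounded_by_mult_right_inverse:
  assumes \<Phi>: "bounded_mat \<Phi>" and F: "bounded_mat F" and \<Phi>F: "\<Phi> **\<^sub>m F = mat_id"
    and gram: "mat_adj \<Phi> **\<^sub>m \<Phi> = mat_add mat_id (mat_adj A **\<^sub>m A)" and A: "mat_bounded_by A C"
  shows "mat_bounded_by (A **\<^sub>m F) (C / sqrt (1 + C^2))"
proof (rule mat_bounded_byI)
  have C: "C \<ge> 0" by (rule mat_bounded_by_nonneg[OF A])
  have bA: "bounded_mat A" using A bounded_mat_iff_bounded_by by blast
  show "bounded_mat (A **\<^sub>m F)" "C / sqrt (1 + C^2) \<ge> 0" using bA F C by simp_all
  fix x assume x: "x \<in> l2"
  let ?u = "mat_apply F x" and ?w = "mat_apply (A **\<^sub>m F) x"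
  have u: "?u \<in> l2" using F x by simp
  have "mat_apply \<Phi> ?u = x" using \<Phi> F x \<Phi>F by (metis mat_apply_id mat_apply_mult)
  with l2norm_power2_gram[OF \<Phi> bA gram u]
  have pythagoras: "(l2norm x)^2 = (l2norm ?u)^2 + (l2norm ?w)^2" using bA F x by simp
  have "(l2norm ?w)^2 \<le> C^2 * (l2norm ?u)^2"
    using mat_bounded_byD(3)[OF A u] l2norm_nonneg[of ?w] bA F x
    by (simp add: power_mult_distrib[symmetric] power_mono)
  then have "(l2norm ?w)^2 * (1 + C^2) \<le> C^2 * (l2norm x)^2"
    unfolding pythagoras by (simp add: algebra_simps)
  then have "(l2norm ?w)^2 \<le> (C / sqrt (1 + C^2) * l2norm x)^2"
    by (simp add: power_mult_distrib power_divide add_pos_nonneg pos_le_divide_eq mult.commute)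
  then show "l2norm ?w \<le> C / sqrt (1 + C^2) * l2norm x"
    by (rule power2_le_imp_le) (simp add: C l2norm_nonneg[OF x])
qed

lemma op_norm_le: "mat_bounded_by X k \<Longrightarrow> op_norm X \<le> k"
  unfolding op_norm_def
proof (rule cSup_least)
  assume X: "mat_bounded_by X k"
  show "{l2norm (mat_apply X x) |x. x \<in> l2 \<and> l2norm x \<le> 1} \<noteq> {}"
    using l2_zero l2norm_zero by fastforce
  fix s assume "s \<in> {l2norm (mat_apply X x) |x. x \<in> l2 \<and> l2norm x \<le> 1}"
  then obtain x where x: "x \<in> l2" "l2norm x \<le> 1" and s: "s = l2norm (mat_apply X x)" by blast
  have "s \<le> k * l2norm x" unfolding s by (rule mat_bounded_byD(3)[OF X x(1)])
  also have "\<dots> \<le> k" using x(2) mat_bounded_by_nonneg[OF X] mult_left_le by blast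
  finally show "s \<le> k" .
qed

lemma divide_sqrt_one_plus_square_less_one: "C / sqrt (1 + C^2) < 1"
  by (metis (mono_tags) abs_ge_self add_pos_nonneg divide_less_eq_1 dual_order.strict_trans2
      less_add_same_cancel2 real_sqrt_abs real_sqrt_less_mono zero_le_power2 zero_less_one
      real_sqrt_gt_zero)

theorem mainTheorem3:
  fixes \<epsilon> :: complex and \<Phi> \<Psi> :: cmat
  assumes eps: "\<epsilon> = 1 \<or> \<epsilon> = -1"
    and bPhi: "bounded_mat \<Phi>" and bPsi: "bounded_mat \<Psi>"
    and h1: "\<Phi> **\<^sub>m mat_adj \<Phi> = mat_add mat_id (mat_scale \<epsilon> (\<Psi> **\<^sub>m mat_adj \<Psi>))"
    and h2: "mat_adj \<Phi> **\<^sub>m \<Phi> = mat_add mat_id (mat_scale \<epsilon> (mat_transpose \<Psi> **\<^sub>m mat_conj \<Psi>))"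
    and h3: "\<Phi> **\<^sub>m mat_transpose \<Psi> = mat_scale \<epsilon> (\<Psi> **\<^sub>m mat_transpose \<Phi>)"
    and h4: "mat_adj \<Phi> **\<^sub>m \<Psi> = mat_scale \<epsilon> (mat_transpose \<Psi> **\<^sub>m mat_conj \<Phi>)"
    and inv: "has_bounded_inverse \<Phi>"
  shows "let X = mat_conj \<Psi> **\<^sub>m mat_inv \<Phi> in
           (\<epsilon> = 1 \<longrightarrow> op_norm X < 1) \<and>
           (\<forall>P. orth_proj P \<longrightarrow>
              has_bounded_inverse
                (mat_diff mat_id (mat_scale \<epsilon> (mat_adj X **\<^sub>m mat_transpose P **\<^sub>m X **\<^sub>m P))) \<and>
              has_bounded_inverse
                (mat_diff mat_id (mat_scale \<epsilon> (X **\<^sub>m P **\<^sub>m mat_adj X **\<^sub>m mat_transpose P))))"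
proof -
  define X where "X = mat_conj \<Psi> **\<^sub>m mat_inv \<Phi>"
  obtain C where C: "mat_bounded_by (mat_conj \<Psi>) C"
    using bPsi bounded_mat_conj bounded_mat_iff_bounded_by by blast
  have contraction: "mat_bounded_by X (C / sqrt (1 + C^2))" if "\<epsilon> = 1"
  proof -
    have "mat_adj \<Phi> **\<^sub>m \<Phi> = mat_add mat_id (mat_adj (mat_conj \<Psi>) **\<^sub>m mat_conj \<Psi>)"
      using h2 that by (simp add: mat_transpose_eq_adj_conj mat_scale_def)
    then show ?thesis
      unfolding X_def by (rule mat_bounded_by_mult_right_inverse[OF bPhi mat_inv(1,2)[OF inv] _ C])
  qed
  obtain k where X: "mat_bounded_by X k" and k: "\<epsilon> = 1 \<longrightarrow> k < 1"
    using contraction divide_sqrt_one_plus_square_less_one bPsi mat_inv(1)[OF inv]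
      bounded_mat_iff_bounded_by[of X]
    unfolding X_def by (cases "\<epsilon> = 1") auto
  have "\<epsilon> = 1 \<longrightarrow> op_norm X < 1"
    using contraction op_norm_le divide_sqrt_one_plus_square_less_one by (meson le_less_trans)
  moreover have "\<epsilon> = -1 \<or> (\<epsilon> = 1 \<and> k < 1)" using eps k by auto
  ultimately show ?thesis
    unfolding Let_def X_def[symmetric] using has_bounded_inverse_one_minus_compressions[OF X] by blast
qed

end
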